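(* Let $H$ be a real symmetric $n\times n$ matrix and let $\lambda_1,\dotsc,\lambda_n$ be its eigenvalues, listed with multiplicity and in order of decreasing absolute value. Let $C\geq 1$ and $B\geq 1$, and suppose $|\lambda_1|\leq CB$. Put \[ N_H(B)=\#\{\vec{y}\in\mathbb{Z}^n:\ \|\vec{y}\|\leq B,\ \|H\vec{y}\|\leq B\}. \] Then there is a constant $A$ depending only on $C$ and $n$ such that \[ N_H(B)\leq A\min_{1\leq i\leq n}\frac{B^n}{1+|\lambda_1\cdots\lambda_i|}. \]
   Context: $\|\vec{t}\|=\max_i|t_i|$ denotes the supremum norm on $\mathbb{R}^n$. *)

theory Defs
  imports "Jordan_Normal_Form.Char_Poly"
begin

definition supnorm :: "real vec \<Rightarrow> real" where
  "supnorm v = Max (insert 0 {\<bar>v $ i\<bar> | i. i < dim_vec v})"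

text \<open>The list ls consists of the eigenvalues of the n x n matrix H listed with
  multiplicity (i.e. the roots of the characteristic polynomial counted with
  multiplicity), ordered by decreasing absolute value.\<close>
definition eigenvalue_list_abs_desc :: "nat \<Rightarrow> real mat \<Rightarrow> real list \<Rightarrow> bool" where
  "eigenvalue_list_abs_desc n H ls \<longleftrightarrow>
     length ls = n \<and>
     char_poly H = prod_list (map (\<lambda>a. [:- a, 1:]) ls) \<and>
     sorted_wrt (\<lambda>a b. \<bar>b\<bar> \<le> \<bar>a\<bar>) ls"

definition N_H :: "nat \<Rightarrow> real mat \<Rightarrow> real \<Rightarrow> nat" where
  "N_H n H B = card {y \<in> carrier_vec n. (\<forall>i<n. y $ i \<in> \<int>) \<and>
                       supnorm y \<le> B \<and> supnorm (H *\<^sub>v y) \<le> B}"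

end

theory Submission
  imports Defs "Jordan_Normal_Form.Schur_Decomposition"
begin

text \<open>Diagonalize \<open>H\<close> in an orthonormal eigenbasis \<open>u\<^sub>1, \<dots>, u\<^sub>n\<close> (the spectral
  theorem, proved by deflation). A counted vector \<open>y\<close> satisfies \<open>\<bar>u\<^sub>j \<bullet> y\<bar> \<le> \<surd>n B\<close> and
  \<open>\<bar>\<lambda>\<^sub>j\<bar> \<bar>u\<^sub>j \<bullet> y\<bar> = \<bar>u\<^sub>j \<bullet> H y\<bar> \<le> \<surd>n B\<close>, so its eigen-coordinates lie in a box with
  half-sides \<open>\<surd>n B / max 1 \<bar>\<lambda>\<^sub>j\<bar>\<close>. Distinct integer vectors are at distance at least 1,
  so they fall into distinct cells of the grid of mesh \<open>1/\<surd>n\<close> in these coordinates, and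
  \<open>N\<^sub>H(B) \<le> \<Prod>\<^sub>j (2nB / max 1 \<bar>\<lambda>\<^sub>j\<bar> + 2)\<close>. Each factor, and \<open>\<bar>\<lambda>\<^sub>j\<bar>\<close> times it, is at most
  \<open>D = (2n + 2) C B\<close>; hence \<open>(1 + \<bar>\<lambda>\<^sub>1 \<cdots> \<lambda>\<^sub>i\<bar>) N\<^sub>H(B) \<le> 2 D\<^sup>n\<close> for every \<open>i\<close>.\<close>

text \<open>Unlike the library's \<open>orthogonal_mat\<close>, which only asks for pairwise orthogonal columns,
  the columns here are orthonormal.\<close>
definition orthonormal_mat :: "nat \<Rightarrow> real mat \<Rightarrow> bool" where
  "orthonormal_mat n U \<longleftrightarrow> U \<in> carrier_mat n n \<and> transpose_mat U * U = 1\<^sub>m n"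

lemma orthonormal_matD:
  assumes "orthonormal_mat n U"
  shows "U \<in> carrier_mat n n" "transpose_mat U * U = 1\<^sub>m n" "U * transpose_mat U = 1\<^sub>m n"
  using assms mat_mult_left_right_inverse[of "transpose_mat U" n U]
  by (auto simp: orthonormal_mat_def)

lemma orthonormal_mat_col_sprod:
  assumes "orthonormal_mat n U" "i < n" "j < n"
  shows "col U i \<bullet> col U j = (if i = j then 1 else 0)"
proof -
  have "col U i \<bullet> col U j = (transpose_mat U * U) $$ (i, j)"
    using assms orthonormal_matD(1)[OF assms(1)] by simp
  thus ?thesis using assms orthonormal_matD(2)[OF assms(1)] by simp
qed

lemma orthonormal_mat_mult:
  assumes U: "orthonormal_mat n U" and V: "orthonormal_mat n V"
  shows "orthonormal_mat n (U * V)"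
proof -
  note U' = orthonormal_matD[OF U] and V' = orthonormal_matD[OF V]
  have "transpose_mat (U * V) * (U * V) = transpose_mat V * (transpose_mat U * U) * V"
    using U'(1) V'(1) by (simp add: transpose_mult assoc_mult_mat[of _ n n _ n _ n])
  also have "\<dots> = 1\<^sub>m n" using U'(2) V'(1,2) by simp
  finally show ?thesis using U'(1) V'(1) by (auto simp: orthonormal_mat_def)
qed

lemma orthonormal_mat_one_block:
  assumes "orthonormal_mat m U"
  shows "orthonormal_mat (Suc m) (four_block_mat (1\<^sub>m 1) (0\<^sub>m 1 m) (0\<^sub>m m 1) U)"
proof -
  note U = orthonormal_matD[OF assms]
  have "transpose_mat (four_block_mat (1\<^sub>m 1) (0\<^sub>m 1 m) (0\<^sub>m m 1) U)
      = four_block_mat (1\<^sub>m 1) (0\<^sub>m 1 m) (0\<^sub>m m 1) (transpose_mat U)"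
    using U(1) by (subst transpose_four_block_mat) auto
  moreover have "four_block_mat (1\<^sub>m 1) (0\<^sub>m 1 m) (0\<^sub>m m 1) (transpose_mat U)
      * four_block_mat (1\<^sub>m 1) (0\<^sub>m 1 m) (0\<^sub>m m 1) U = 1\<^sub>m (Suc m)"
    using U by (subst mult_four_block_mat, auto)
  ultimately show ?thesis using U(1) unfolding orthonormal_mat_def by auto
qed

lemma orthonormal_completion:
  fixes v :: "real vec"
  assumes v: "v \<in> carrier_vec n" and v0: "v \<noteq> 0\<^sub>v n"
  obtains W c where "orthonormal_mat n W" "col W 0 = c \<cdot>\<^sub>v v"
proof -
  interpret cof_vec_space n "TYPE(real)" .
  define b where "b = basis_completion v"
  from basis_completion[OF v v0, folded b_def]
  have b: "distinct b" "\<not> lin_dep (set b)" "set b \<subseteq> carrier_vec n" "hd b = v" "length b = n"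
    by auto
  have n: "n \<noteq> 0" using v0 v by auto
  with b(4,5) obtain vs where bv: "b = v # vs" by (cases b) auto
  define ws where "ws = gram_schmidt n b"
  from gram_schmidt_result[OF b(3,1,2) refl, folded ws_def]
  have ws: "set ws \<subseteq> carrier_vec n" "corthogonal ws" "length ws = n"
    by (auto simp: b(5))
  have ws0: "ws ! 0 = v"
    using gram_schmidt_hd[OF v, of vs, folded bv ws_def] n ws(3) by (metis hd_conv_nth list.size(3))
  have ws_pos: "ws ! i \<bullet> ws ! i > 0" if "i < n" for i
  proof -
    have "ws ! i \<bullet> ws ! i \<noteq> 0" using corthogonalD[OF ws(2), of i i] that ws(3) by simp
    moreover have "ws ! i \<bullet> ws ! i \<ge> 0" unfolding scalar_prod_def by (intro sum_nonneg) auto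
    ultimately show ?thesis by linarith
  qed
  define W where "W = mat_of_cols n (map (\<lambda>w. (1 / sqrt (w \<bullet> w)) \<cdot>\<^sub>v w) ws)"
  have W: "W \<in> carrier_mat n n" unfolding W_def using ws(3) by auto
  have colW: "col W i = (1 / sqrt (ws ! i \<bullet> ws ! i)) \<cdot>\<^sub>v ws ! i" if "i < n" for i
    unfolding W_def using that ws by (subst col_mat_of_cols) auto
  have "transpose_mat W * W = 1\<^sub>m n"
  proof (rule eq_matI)
    fix i j assume "i < dim_row (1\<^sub>m n)" "j < dim_col (1\<^sub>m n)"
    hence i: "i < n" and j: "j < n" by auto
    have wsi: "ws ! i \<in> carrier_vec n" "ws ! j \<in> carrier_vec n" using ws i j by auto
    have "(transpose_mat W * W) $$ (i, j) = col W i \<bullet> col W j"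
      using W i j by simp
    also have "\<dots> = (1 / sqrt (ws ! i \<bullet> ws ! i)) * (1 / sqrt (ws ! j \<bullet> ws ! j)) * (ws ! i \<bullet> ws ! j)"
      using colW[OF i] colW[OF j] wsi by simp
    also have "\<dots> = 1\<^sub>m n $$ (i, j)"
      using ws_pos[OF i] corthogonalD[OF ws(2), of i j] i j ws(3) by (auto simp: field_simps)
    finally show "(transpose_mat W * W) $$ (i, j) = 1\<^sub>m n $$ (i, j)" .
  qed (use W in auto)
  with W have "orthonormal_mat n W" unfolding orthonormal_mat_def by simp
  moreover have "col W 0 = (1 / sqrt (v \<bullet> v)) \<cdot>\<^sub>v v" using colW[of 0] n ws0 by simp
  ultimately show thesis by (rule that)
qed

lemma symmetric_mat_deflate:
  assumes H: "H \<in> carrier_mat (Suc m) (Suc m)" "transpose_mat H = H"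
    and W: "orthonormal_mat (Suc m) W"
    and eigen: "H *\<^sub>v col W 0 = e \<cdot>\<^sub>v col W 0"
  obtains H3 where "H3 \<in> carrier_mat m m" "transpose_mat H3 = H3"
    "transpose_mat W * H * W = four_block_mat (mat 1 1 (\<lambda>_. e)) (0\<^sub>m 1 m) (0\<^sub>m m 1) H3"
proof -
  note W' = orthonormal_matD[OF W]
  define A where "A = transpose_mat W * H * W"
  have A: "A \<in> carrier_mat (Suc m) (Suc m)" unfolding A_def using W'(1) H(1) by auto
  have A_sym: "A $$ (i, j) = A $$ (j, i)" if "i < Suc m" "j < Suc m" for i j
  proof -
    have "transpose_mat A = transpose_mat (transpose_mat W * (H * W))"
      unfolding A_def using H(1) W'(1) by (simp add: assoc_mult_mat[of _ "Suc m" "Suc m"])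
    also have "\<dots> = transpose_mat (H * W) * W"
      using H(1) W'(1) by (subst transpose_mult[of _ "Suc m" "Suc m"]) auto
    also have "\<dots> = transpose_mat W * transpose_mat H * W"
      using H(1) W'(1) by (simp add: transpose_mult)
    finally have "transpose_mat A = transpose_mat W * transpose_mat H * W" .
    hence "transpose_mat A = A" unfolding A_def H(2) .
    from arg_cong[OF this, of "\<lambda>M. M $$ (j, i)"] show ?thesis using that A by simp
  qed
  have A_col0: "A $$ (i, 0) = (if i = 0 then e else 0)" if i: "i < Suc m" for i
  proof -
    have "A $$ (i, 0) = col W i \<bullet> (H *\<^sub>v col W 0)"
      unfolding A_def using W'(1) H(1) i
      by (simp add: assoc_mult_mat[of _ "Suc m" "Suc m" _ "Suc m" _ "Suc m"] mult_mat_vec_def)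
    also have "\<dots> = e * (col W i \<bullet> col W 0)" unfolding eigen using W'(1) i by simp
    finally show ?thesis using orthonormal_mat_col_sprod[OF W i, of 0] by simp
  qed
  define H3 where "H3 = mat m m (\<lambda>(i, j). A $$ (Suc i, Suc j))"
  have "H3 \<in> carrier_mat m m" unfolding H3_def by simp
  moreover have "transpose_mat H3 = H3"
    by (rule eq_matI) (use A_sym in \<open>auto simp: H3_def\<close>)
  moreover have "A = four_block_mat (mat 1 1 (\<lambda>_. e)) (0\<^sub>m 1 m) (0\<^sub>m m 1) H3"
  proof (rule eq_matI)
    fix i j assume "i < dim_row (four_block_mat (mat 1 1 (\<lambda>_. e)) (0\<^sub>m 1 m) (0\<^sub>m m 1) H3)"
      "j < dim_col (four_block_mat (mat 1 1 (\<lambda>_. e)) (0\<^sub>m 1 m) (0\<^sub>m m 1) H3)"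
    hence i: "i < Suc m" and j: "j < Suc m" by (auto simp: H3_def)
    show "A $$ (i, j) = four_block_mat (mat 1 1 (\<lambda>_. e)) (0\<^sub>m 1 m) (0\<^sub>m m 1) H3 $$ (i, j)"
      using A_col0[OF i] A_col0[OF j] A_sym[OF i j] i j
      by (cases i; cases j) (auto simp: H3_def)
  qed (use A in \<open>auto simp: H3_def\<close>)
  ultimately show thesis using that unfolding A_def by blast
qed

lemma char_poly_orthonormal_conj:
  assumes W: "orthonormal_mat n W" and H: "H \<in> carrier_mat n n"
  shows "char_poly (transpose_mat W * H * W) = char_poly H"
proof -
  note W' = orthonormal_matD[OF W]
  have "similar_mat_wit (transpose_mat W * H * W) H (transpose_mat W) W"
    unfolding similar_mat_wit_def Let_def using H W' by auto
  hence "similar_mat (transpose_mat W * H * W) H" unfolding similar_mat_def by blast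
  thus ?thesis by (rule char_poly_similar)
qed

lemma mult_orthonormal_conj_diagonalization:
  assumes W: "orthonormal_mat n W" and H: "H \<in> carrier_mat n n" and F: "F \<in> carrier_mat n n"
    and D: "D \<in> carrier_mat n n" and conj: "transpose_mat W * H * W * F = F * D"
  shows "H * (W * F) = W * F * D"
proof -
  note W' = orthonormal_matD[OF W]
  have HW: "H * W = W * (transpose_mat W * H * W)"
  proof -
    have "W * (transpose_mat W * H * W) = W * (transpose_mat W * (H * W))"
      using H W'(1) by (subst assoc_mult_mat) auto
    also have "\<dots> = (W * transpose_mat W) * (H * W)"
      using H W'(1) by (subst assoc_mult_mat) auto
    finally show ?thesis using H W'(1,3) by simp
  qed
  have "H * (W * F) = H * W * F"
    using H W'(1) F by (subst assoc_mult_mat) auto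
  also have "\<dots> = W * (transpose_mat W * H * W * F)"
    unfolding HW using H W'(1) F by (subst assoc_mult_mat) auto
  also have "\<dots> = W * F * D"
    unfolding conj using W'(1) F D by (subst assoc_mult_mat[of W n n F n D n]) auto
  finally show ?thesis .
qed

lemma four_block_diagonalization:
  fixes H3 :: "'a :: comm_ring_1 mat"
  assumes H3: "H3 \<in> carrier_mat m m" and U3: "U3 \<in> carrier_mat m m"
    and HU3: "H3 * U3 = U3 * mat_diag m (\<lambda>j. es ! j)"
  shows "four_block_mat (mat 1 1 (\<lambda>_. e)) (0\<^sub>m 1 m) (0\<^sub>m m 1) H3
      * four_block_mat (1\<^sub>m 1) (0\<^sub>m 1 m) (0\<^sub>m m 1) U3
    = four_block_mat (1\<^sub>m 1) (0\<^sub>m 1 m) (0\<^sub>m m 1) U3 * mat_diag (Suc m) (\<lambda>j. (e # es) ! j)"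
proof -
  have diag: "mat_diag (Suc m) (\<lambda>j. (e # es) ! j)
      = four_block_mat (mat 1 1 (\<lambda>_. e)) (0\<^sub>m 1 m) (0\<^sub>m m 1) (mat_diag m (\<lambda>j. es ! j))"
    by (rule eq_matI) (auto simp: mat_diag_def nth_Cons')
  show ?thesis unfolding diag using H3 U3 HU3
    by (subst (1 2) mult_four_block_mat) (auto simp: left_mult_zero_mat[OF mat_diag_dim])
qed

theorem real_symmetric_mat_diagonalization:
  assumes H: "H \<in> carrier_mat n n" "transpose_mat H = H"
    and char_poly: "char_poly H = (\<Prod>a\<leftarrow>es. [:- a, 1:])"
  obtains U where "orthonormal_mat n U" "H * U = U * mat_diag n (\<lambda>j. es ! j)"
  using assms
proof (induct es arbitrary: n H thesis)
  case Nil
  with degree_monic_char_poly[of H n] have "n = 0" by auto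
  with Nil show ?case
    by (intro Nil(1)[of "1\<^sub>m 0"]) (auto simp: orthonormal_mat_def mat_diag_def intro!: eq_matI)
next
  case (Cons e es n H)
  have cp: "char_poly H = [:- e, 1:] * (\<Prod>a\<leftarrow>es. [:- a, 1:])" using Cons(5) by simp
  have "monic (\<Prod>a\<leftarrow>es. [:- a, 1:])" by (rule monic_prod_list) auto
  hence "degree (char_poly H) = Suc (degree (\<Prod>a\<leftarrow>es. [:- a, 1:]))"
    unfolding cp by (subst degree_mult_eq) auto
  with degree_monic_char_poly[OF Cons(3)] obtain m where nm: "n = Suc m" by (cases n) auto
  note H = Cons(3,4)[unfolded nm]
  have "eigenvalue H e" unfolding eigenvalue_root_char_poly[OF H(1)] cp by simp
  from find_eigenvector[OF H(1) this] obtain v where "eigenvector H v e" by blast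
  hence v: "v \<in> carrier_vec (Suc m)" "v \<noteq> 0\<^sub>v (Suc m)" "H *\<^sub>v v = e \<cdot>\<^sub>v v"
    unfolding eigenvector_def using H(1) by auto
  obtain W c where W: "orthonormal_mat (Suc m) W" and Wv: "col W 0 = c \<cdot>\<^sub>v v"
    using orthonormal_completion[OF v(1,2)] .
  have "H *\<^sub>v col W 0 = e \<cdot>\<^sub>v col W 0"
    unfolding Wv using mult_mat_vec[OF H(1) v(1), of c] v by (simp add: smult_smult_assoc mult.commute)
  from symmetric_mat_deflate[OF H W this] obtain H3 where H3: "H3 \<in> carrier_mat m m"
    "transpose_mat H3 = H3"
    and block: "transpose_mat W * H * W = four_block_mat (mat 1 1 (\<lambda>_. e)) (0\<^sub>m 1 m) (0\<^sub>m m 1) H3" .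
  have "char_poly H = char_poly (transpose_mat W * H * W)"
    by (rule char_poly_orthonormal_conj[OF W H(1), symmetric])
  also have "\<dots> = char_poly (mat 1 1 (\<lambda>_. e)) * char_poly H3"
    unfolding block by (rule char_poly_four_block_zeros_col[OF _ _ H3(1)]) auto
  also have "char_poly (mat 1 1 (\<lambda>_. e)) = [:- e, 1:]"
    by (simp add: char_poly_defs det_def sign_def)
  finally have "char_poly H3 = (\<Prod>a\<leftarrow>es. [:- a, 1:])"
    unfolding cp by (subst (asm) mult_left_cancel) simp_all
  from Cons(1)[OF _ H3 this] obtain U3 where U3: "orthonormal_mat m U3"
    and HU3: "H3 * U3 = U3 * mat_diag m (\<lambda>j. es ! j)" by blast
  define F where "F = four_block_mat (1\<^sub>m 1) (0\<^sub>m 1 m) (0\<^sub>m m 1) U3"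
  have F: "orthonormal_mat (Suc m) F" unfolding F_def by (rule orthonormal_mat_one_block[OF U3])
  have "transpose_mat W * H * W * F = F * mat_diag (Suc m) (\<lambda>j. (e # es) ! j)"
    unfolding block F_def by (rule four_block_diagonalization[OF H3(1) orthonormal_matD(1)[OF U3] HU3])
  hence "H * (W * F) = W * F * mat_diag (Suc m) (\<lambda>j. (e # es) ! j)"
    by (rule mult_orthonormal_conj_diagonalization[OF W H(1) orthonormal_matD(1)[OF F] mat_diag_dim])
  thus ?case using Cons(2)[of "W * F"] orthonormal_mat_mult[OF W F] unfolding nm by blast
qed

lemma diagonalization_col_eigenvector:
  fixes H :: "'a :: comm_ring_1 mat"
  assumes H: "H \<in> carrier_mat n n" and U: "U \<in> carrier_mat n n"
    and HU: "H * U = U * mat_diag n f" and j: "j < n"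
  shows "H *\<^sub>v col U j = f j \<cdot>\<^sub>v col U j"
proof -
  have "H *\<^sub>v col U j = col (U * mat_diag n f) j"
    unfolding HU[symmetric] by (rule col_mult2[symmetric, OF H U j])
  also have "\<dots> = f j \<cdot>\<^sub>v col U j"
    using U j by (subst mat_diag_mult_right[OF U]) (auto intro!: eq_vecI simp: mult.commute)
  finally show ?thesis .
qed

lemma sprod_symmetric_mat_eigenvector:
  fixes H :: "'a :: comm_ring_1 mat"
  assumes H: "H \<in> carrier_mat n n" "transpose_mat H = H"
    and u: "u \<in> carrier_vec n" and y: "y \<in> carrier_vec n" and Hu: "H *\<^sub>v u = e \<cdot>\<^sub>v u"
  shows "u \<bullet> (H *\<^sub>v y) = e * (u \<bullet> y)"
  using transpose_vec_mult_scalar[OF H(1) y u] u y by (simp add: H(2) Hu)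

lemma orthonormal_mat_sum_sq_col_sprod:
  assumes U: "orthonormal_mat n U" and z: "z \<in> carrier_vec n"
  shows "(\<Sum>j<n. (col U j \<bullet> z)\<^sup>2) = z \<bullet> z"
proof -
  note U' = orthonormal_matD[OF U]
  define w where "w = transpose_mat U *\<^sub>v z"
  have w: "w \<in> carrier_vec n" and w_nth: "\<And>j. j < n \<Longrightarrow> w $ j = col U j \<bullet> z"
    unfolding w_def using U'(1) z by auto
  have "(\<Sum>j<n. (col U j \<bullet> z)\<^sup>2) = w \<bullet> w"
    using w by (simp add: scalar_prod_def w_nth power2_eq_square atLeast0LessThan)
  also have "\<dots> = z \<bullet> (U *\<^sub>v w)"
    unfolding w_def using U'(1) z by (intro transpose_vec_mult_scalar) auto
  also have "U *\<^sub>v w = (U * transpose_mat U) *\<^sub>v z"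
    unfolding w_def using U'(1) z by simp
  finally show ?thesis using U'(3) z by simp
qed

lemma supnorm_nonneg: "0 \<le> supnorm v"
  unfolding supnorm_def by (rule Max_ge) auto

lemma abs_index_le_supnorm:
  assumes "i < dim_vec v"
  shows "\<bar>v $ i\<bar> \<le> supnorm v"
  unfolding supnorm_def using assms by (intro Max_ge) auto

lemma orthonormal_col_sprod_le_supnorm:
  assumes U: "orthonormal_mat n U" and w: "w \<in> carrier_vec n" and j: "j < n"
  shows "\<bar>col U j \<bullet> w\<bar> \<le> sqrt (real n) * supnorm w"
proof -
  have "(col U j \<bullet> w)\<^sup>2 \<le> (\<Sum>j<n. (col U j \<bullet> w)\<^sup>2)"
    using j by (intro member_le_sum) auto
  also have "\<dots> = w \<bullet> w" by (rule orthonormal_mat_sum_sq_col_sprod[OF U w])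
  also have "\<dots> = (\<Sum>i<n. (w $ i)\<^sup>2)"
    using w by (simp add: scalar_prod_def power2_eq_square atLeast0LessThan)
  also have "\<dots> \<le> (\<Sum>i<n. (supnorm w)\<^sup>2)"
  proof (rule sum_mono)
    fix i assume "i \<in> {..<n}"
    hence "\<bar>w $ i\<bar> \<le> \<bar>supnorm w\<bar>"
      using w abs_index_le_supnorm[of i w] supnorm_nonneg[of w] by simp
    thus "(w $ i)\<^sup>2 \<le> (supnorm w)\<^sup>2" by (simp only: abs_le_square_iff)
  qed
  also have "\<dots> = (sqrt (real n) * supnorm w)\<^sup>2" by (simp add: power_mult_distrib)
  finally have "\<bar>col U j \<bullet> w\<bar>\<^sup>2 \<le> (sqrt (real n) * supnorm w)\<^sup>2" by simp
  thus ?thesis by (rule power2_le_imp_le) (simp add: supnorm_nonneg)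
qed

lemma int_vec_sprod_self_ge_1:
  fixes z :: "real vec"
  assumes z: "z \<in> carrier_vec n" and z_int: "\<forall>i<n. z $ i \<in> \<int>" and z0: "z \<noteq> 0\<^sub>v n"
  shows "1 \<le> z \<bullet> z"
proof -
  obtain k where k: "k < n" and zk: "z $ k \<noteq> 0"
    using z0 z by (metis eq_vecI carrier_vecD index_zero_vec)
  from z_int k zk have "1 \<le> \<bar>z $ k\<bar>" by (auto elim!: Ints_cases)
  hence "1 \<le> (z $ k)\<^sup>2" by (simp add: abs_le_square_iff[of 1, simplified])
  also have "\<dots> \<le> (\<Sum>i<n. (z $ i)\<^sup>2)" using k by (intro member_le_sum) auto
  also have "\<dots> = z \<bullet> z" using z by (simp add: scalar_prod_def power2_eq_square atLeast0LessThan)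
  finally show ?thesis .
qed

lemma int_vecs_eq_if_orthonormal_coords_close:
  assumes U: "orthonormal_mat n U"
    and y: "y \<in> carrier_vec n" "\<forall>i<n. y $ i \<in> \<int>"
    and y': "y' \<in> carrier_vec n" "\<forall>i<n. y' $ i \<in> \<int>"
    and close: "\<And>j. j < n \<Longrightarrow> sqrt (real n) * \<bar>col U j \<bullet> y - col U j \<bullet> y'\<bar> < 1"
  shows "y = y'"
proof -
  define z where "z = y - y'"
  have z: "z \<in> carrier_vec n" "\<forall>i<n. z $ i \<in> \<int>"
    unfolding z_def using y y' by auto
  have coord: "col U j \<bullet> z = col U j \<bullet> y - col U j \<bullet> y'" if "j < n" for j
    unfolding z_def using orthonormal_matD(1)[OF U] that y(1) y'(1)
    by (intro scalar_prod_minus_distrib) auto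
  have "z \<bullet> z < 1"
  proof (cases "n = 0")
    case False
    have small: "(col U j \<bullet> z)\<^sup>2 < 1 / real n" if "j < n" for j
    proof -
      have "(sqrt (real n) * \<bar>col U j \<bullet> z\<bar>)\<^sup>2 < 1"
        using close[OF that] by (simp add: coord[OF that] power_less_one_iff)
      thus ?thesis using False by (simp add: power_mult_distrib field_simps)
    qed
    have "z \<bullet> z = (\<Sum>j<n. (col U j \<bullet> z)\<^sup>2)"
      by (rule orthonormal_mat_sum_sq_col_sprod[OF U z(1), symmetric])
    also have "\<dots> < (\<Sum>j<n. 1 / real n)"
      using False small by (intro sum_strict_mono) auto
    finally show ?thesis using False by simp
  qed (use z in \<open>simp add: scalar_prod_def\<close>)
  with int_vec_sprod_self_ge_1[OF z] have "z = 0\<^sub>v n" by linarith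
  show ?thesis
  proof (rule eq_vecI)
    fix i assume "i < dim_vec y'"
    with \<open>z = 0\<^sub>v n\<close> show "y $ i = y' $ i"
      unfolding z_def using y(1) y'(1) by (metis carrier_vecD index_minus_vec(1) index_zero_vec(1) eq_iff_diff_eq_0)
  qed (use y y' in auto)
qed

lemma card_int_vecs_in_orthonormal_box:
  assumes U: "orthonormal_mat n U" and a: "\<And>j. j < n \<Longrightarrow> 0 \<le> a j"
    and S: "\<And>y. y \<in> S \<Longrightarrow>
      y \<in> carrier_vec n \<and> (\<forall>i<n. y $ i \<in> \<int>) \<and> (\<forall>j<n. \<bar>col U j \<bullet> y\<bar> \<le> a j)"
  shows "real (card S) \<le> (\<Prod>j<n. 2 * sqrt (real n) * a j + 2)"
proof -
  define r where "r = sqrt (real n)"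
  have r: "0 \<le> r" unfolding r_def by simp
  define I where "I j = {\<lfloor>- (r * a j)\<rfloor> .. \<lfloor>r * a j\<rfloor>}" for j
  define cell where "cell y = restrict (\<lambda>j. \<lfloor>r * (col U j \<bullet> y)\<rfloor>) {..<n}" for y
  have "cell ` S \<subseteq> PiE {..<n} I"
  proof (clarsimp simp: cell_def)
    fix y j assume "y \<in> S" "j < n"
    hence "\<bar>col U j \<bullet> y\<bar> \<le> a j" using S by blast
    hence "\<bar>r * (col U j \<bullet> y)\<bar> \<le> r * a j"
      using mult_left_mono[OF _ r] by (simp add: abs_mult abs_of_nonneg[OF r])
    thus "\<lfloor>r * (col U j \<bullet> y)\<rfloor> \<in> I j"
      unfolding I_def by (auto simp: abs_le_iff intro: floor_mono)
  qed
  moreover have "inj_on cell S"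
  proof (rule inj_onI)
    fix y y' assume y: "y \<in> S" and y': "y' \<in> S" and eq: "cell y = cell y'"
    have "sqrt (real n) * \<bar>col U j \<bullet> y - col U j \<bullet> y'\<bar> < 1" if j: "j < n" for j
    proof -
      have "\<lfloor>r * (col U j \<bullet> y)\<rfloor> = \<lfloor>r * (col U j \<bullet> y')\<rfloor>"
        using fun_cong[OF eq, of j] j by (simp add: cell_def)
      hence "\<bar>r * (col U j \<bullet> y) - r * (col U j \<bullet> y')\<bar> < 1" by linarith
      also have "r * (col U j \<bullet> y) - r * (col U j \<bullet> y') = r * (col U j \<bullet> y - col U j \<bullet> y')"
        by (simp only: right_diff_distrib)
      finally show ?thesis unfolding r_def by (simp add: abs_mult)
    qed
    with S[OF y] S[OF y'] show "y = y'"
      by (intro int_vecs_eq_if_orthonormal_coords_close[OF U]) auto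
  qed
  ultimately have "card S \<le> card (PiE {..<n} I)"
    by (intro card_inj_on_le) (auto simp: I_def intro: finite_PiE)
  hence "real (card S) \<le> (\<Prod>j<n. real (card (I j)))"
    by (simp add: card_PiE flip: of_nat_prod)
  also have "\<dots> \<le> (\<Prod>j<n. 2 * r * a j + 2)"
  proof (rule prod_mono)
    fix j assume "j \<in> {..<n}"
    hence "0 \<le> r * a j" using a r by simp
    thus "0 \<le> real (card (I j)) \<and> real (card (I j)) \<le> 2 * r * a j + 2"
      unfolding I_def by simp linarith
  qed
  finally show ?thesis unfolding r_def .
qed

lemma abs_eigencoord_mult_le:
  assumes H: "H \<in> carrier_mat n n" "transpose_mat H = H" and U: "orthonormal_mat n U"
    and j: "j < n" and Hu: "H *\<^sub>v col U j = lam \<cdot>\<^sub>v col U j"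
    and y: "y \<in> carrier_vec n" "supnorm y \<le> B" "supnorm (H *\<^sub>v y) \<le> B"
  shows "\<bar>col U j \<bullet> y\<bar> * max 1 \<bar>lam\<bar> \<le> sqrt (real n) * B"
proof -
  have "\<bar>col U j \<bullet> y\<bar> \<le> sqrt (real n) * B"
    using orthonormal_col_sprod_le_supnorm[OF U y(1) j] y(2) by (simp add: mult_left_mono order_trans)
  moreover have "\<bar>lam\<bar> * \<bar>col U j \<bullet> y\<bar> \<le> sqrt (real n) * B"
  proof -
    have "col U j \<bullet> (H *\<^sub>v y) = lam * (col U j \<bullet> y)"
      using orthonormal_matD(1)[OF U] j by (intro sprod_symmetric_mat_eigenvector[OF H _ y(1) Hu]) auto
    moreover have "\<bar>col U j \<bullet> (H *\<^sub>v y)\<bar> \<le> sqrt (real n) * supnorm (H *\<^sub>v y)"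
      using H(1) y(1) by (intro orthonormal_col_sprod_le_supnorm[OF U _ j]) auto
    ultimately show ?thesis using y(3) by (simp add: abs_mult mult_left_mono order_trans)
  qed
  ultimately show ?thesis by (simp add: max_def mult.commute)
qed

lemma N_H_le_prod_eigenvalues:
  assumes H: "H \<in> carrier_mat n n" "transpose_mat H = H"
    and char_poly: "char_poly H = (\<Prod>a\<leftarrow>ls. [:- a, 1:])"
    and B: "0 \<le> B"
  shows "real (N_H n H B) \<le> (\<Prod>j<n. 2 * real n * B / max 1 \<bar>ls ! j\<bar> + 2)"
proof -
  obtain U where U: "orthonormal_mat n U" and HU: "H * U = U * mat_diag n (\<lambda>j. ls ! j)"
    using real_symmetric_mat_diagonalization[OF H char_poly] .
  define a where "a j = sqrt (real n) * B / max 1 \<bar>ls ! j\<bar>" for j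
  have "real (N_H n H B) \<le> (\<Prod>j<n. 2 * sqrt (real n) * a j + 2)"
    unfolding N_H_def
  proof (rule card_int_vecs_in_orthonormal_box[OF U])
    show "0 \<le> a j" for j unfolding a_def using B by simp
    fix y assume "y \<in> {y \<in> carrier_vec n. (\<forall>i<n. y $ i \<in> \<int>) \<and> supnorm y \<le> B \<and> supnorm (H *\<^sub>v y) \<le> B}"
    hence y: "y \<in> carrier_vec n" "\<forall>i<n. y $ i \<in> \<int>" "supnorm y \<le> B" "supnorm (H *\<^sub>v y) \<le> B"
      by auto
    have "\<bar>col U j \<bullet> y\<bar> \<le> a j" if j: "j < n" for j
      using abs_eigencoord_mult_le[OF H U j
          diagonalization_col_eigenvector[OF H(1) orthonormal_matD(1)[OF U] HU j] y(1,3,4)]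
      unfolding a_def by (simp add: pos_le_divide_eq)
    with y show "y \<in> carrier_vec n \<and> (\<forall>i<n. y $ i \<in> \<int>) \<and> (\<forall>j<n. \<bar>col U j \<bullet> y\<bar> \<le> a j)"
      by blast
  qed
  also have "\<dots> = (\<Prod>j<n. 2 * real n * B / max 1 \<bar>ls ! j\<bar> + 2)"
  proof (rule prod.cong[OF refl])
    fix j
    have "2 * sqrt (real n) * a j = 2 * (sqrt (real n) * sqrt (real n)) * B / max 1 \<bar>ls ! j\<bar>"
      unfolding a_def by simp
    thus "2 * sqrt (real n) * a j + 2 = 2 * real n * B / max 1 \<bar>ls ! j\<bar> + 2"
      by (simp only: real_sqrt_mult_self abs_of_nat)
  qed
  finally show ?thesis .
qed

lemma prod_le_with_partial_weights:
  fixes f lam :: "nat \<Rightarrow> real"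
  assumes i: "i \<le> n" and f: "\<And>j. j < n \<Longrightarrow> 0 \<le> f j \<and> f j \<le> D \<and> \<bar>lam j\<bar> * f j \<le> D"
  shows "(1 + \<bar>\<Prod>j<i. lam j\<bar>) * (\<Prod>j<n. f j) \<le> 2 * D ^ n"
proof (cases "n = 0")
  case False
  hence D: "0 \<le> D" using f[of 0] by linarith
  have split: "(\<Prod>j<n. g j) = (\<Prod>j<i. g j) * (\<Prod>j\<in>{i..<n}. g j)" for g :: "nat \<Rightarrow> real"
    using i by (metis prod.atLeastLessThan_concat lessThan_atLeast0 zero_le)
  have "(\<Prod>j<n. f j) \<le> D ^ n"
    using f by (metis (no_types) prod_mono lessThan_iff prod_constant card_lessThan)
  moreover have "\<bar>\<Prod>j<i. lam j\<bar> * (\<Prod>j<n. f j) \<le> D ^ n"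
  proof -
    have "\<bar>\<Prod>j<i. lam j\<bar> * (\<Prod>j<n. f j)
        = (\<Prod>j<i. \<bar>lam j\<bar> * f j) * (\<Prod>j\<in>{i..<n}. f j)"
      by (simp add: split abs_prod prod.distrib)
    also have "\<dots> \<le> (\<Prod>j<i. D) * (\<Prod>j\<in>{i..<n}. D)"
      using f i D by (intro mult_mono prod_mono prod_nonneg) auto
    also have "\<dots> = D ^ n" using i by (simp flip: power_add)
    finally show ?thesis .
  qed
  ultimately show ?thesis by (simp add: algebra_simps)
qed (use i in simp)

lemma eigenvalue_weight_le:
  fixes lam B C :: real
  assumes B: "1 \<le> B" and C: "1 \<le> C" and lam: "\<bar>lam\<bar> \<le> C * B"
  shows "2 * real n * B / max 1 \<bar>lam\<bar> + 2 \<le> (2 * real n + 2) * C * B"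
    and "\<bar>lam\<bar> * (2 * real n * B / max 1 \<bar>lam\<bar> + 2) \<le> (2 * real n + 2) * C * B"
proof -
  have nB: "0 \<le> real n * B" and CB: "1 \<le> C * B" using B C by (simp, metis mult_mono' mult_1 zero_le_one)
  have nB_le: "real n * B \<le> real n * B * C" using nB C by (simp add: mult_le_cancel_left1)
  have "2 * real n * B / max 1 \<bar>lam\<bar> \<le> 2 * real n * B / 1"
    using nB by (intro divide_left_mono) (auto simp: mult.commute)
  thus "2 * real n * B / max 1 \<bar>lam\<bar> + 2 \<le> (2 * real n + 2) * C * B"
    using nB_le CB by (simp add: algebra_simps)
  have "\<bar>lam\<bar> / max 1 \<bar>lam\<bar> \<le> 1" by simp
  hence "\<bar>lam\<bar> / max 1 \<bar>lam\<bar> * (2 * real n * B) \<le> 2 * real n * B"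
    using nB by (intro mult_left_le_one_le) (auto simp: mult.commute)
  hence "\<bar>lam\<bar> * (2 * real n * B / max 1 \<bar>lam\<bar>) \<le> 2 * real n * B"
    by (metis times_divide_eq_left times_divide_eq_right)
  thus "\<bar>lam\<bar> * (2 * real n * B / max 1 \<bar>lam\<bar> + 2) \<le> (2 * real n + 2) * C * B"
    using nB_le lam by (simp add: algebra_simps)
qed

lemma abs_nth_le_abs_hd_if_sorted_abs_desc:
  fixes ls :: "'a :: linordered_idom list"
  assumes "sorted_wrt (\<lambda>a b. \<bar>b\<bar> \<le> \<bar>a\<bar>) ls" and "j < length ls"
  shows "\<bar>ls ! j\<bar> \<le> \<bar>ls ! 0\<bar>"
  using assms sorted_wrt_nth_less[OF assms(1), of 0 j] by (cases j) auto

lemma prod_list_take_conv_prod_nth: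
  "i \<le> length xs \<Longrightarrow> prod_list (take i xs) = (\<Prod>j<i. xs ! j)"
  by (induct i) (auto simp: take_Suc_conv_app_nth)

lemma N_H_mult_eigenvalue_prod_le:
  assumes H: "H \<in> carrier_mat n n" "transpose_mat H = H" and ev: "eigenvalue_list_abs_desc n H ls"
    and B: "1 \<le> B" and C: "1 \<le> C" and ls0: "\<bar>ls ! 0\<bar> \<le> C * B" and i: "i \<le> n"
  shows "(1 + \<bar>prod_list (take i ls)\<bar>) * real (N_H n H B) \<le> 2 * ((2 * real n + 2) * C) ^ n * B ^ n"
proof -
  from ev have len: "length ls = n" and char_poly: "char_poly H = (\<Prod>a\<leftarrow>ls. [:- a, 1:])"
    and sorted: "sorted_wrt (\<lambda>a b. \<bar>b\<bar> \<le> \<bar>a\<bar>) ls"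
    unfolding eigenvalue_list_abs_desc_def by auto
  define f where "f j = 2 * real n * B / max 1 \<bar>ls ! j\<bar> + 2" for j
  have "\<bar>ls ! j\<bar> \<le> C * B" if "j < n" for j
    using abs_nth_le_abs_hd_if_sorted_abs_desc[OF sorted] that len ls0 by fastforce
  hence "(1 + \<bar>\<Prod>j<i. ls ! j\<bar>) * (\<Prod>j<n. f j) \<le> 2 * ((2 * real n + 2) * C * B) ^ n"
    using i B C eigenvalue_weight_le unfolding f_def
    by (intro prod_le_with_partial_weights) (auto intro: add_nonneg_nonneg)
  moreover have "real (N_H n H B) \<le> (\<Prod>j<n. f j)"
    unfolding f_def using N_H_le_prod_eigenvalues[OF H char_poly] B by simp
  ultimately show ?thesis
    using i len by (simp add: prod_list_take_conv_prod_nth power_mult_distrib order_trans[OF mult_left_mono])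
qed

theorem lemma2p1:
  fixes n :: nat and C :: real
  assumes "n \<ge> 1" and "C \<ge> 1"
  shows "\<exists>A::real. \<forall>(H::real mat) (B::real) (ls::real list).
           H \<in> carrier_mat n n \<longrightarrow> transpose_mat H = H \<longrightarrow>
           eigenvalue_list_abs_desc n H ls \<longrightarrow>
           B \<ge> 1 \<longrightarrow> \<bar>ls ! 0\<bar> \<le> C * B \<longrightarrow>
           real (N_H n H B) \<le>
             A * Min ((\<lambda>i. B ^ n / (1 + \<bar>prod_list (take i ls)\<bar>)) ` {1..n})"
proof (intro exI allI impI)
  fix H :: "real mat" and B :: real and ls :: "real list"
  assume H: "H \<in> carrier_mat n n" "transpose_mat H = H" and ev: "eigenvalue_list_abs_desc n H ls"
    and B: "B \<ge> 1" and ls0: "\<bar>ls ! 0\<bar> \<le> C * B"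
  let ?M = "(\<lambda>i. B ^ n / (1 + \<bar>prod_list (take i ls)\<bar>)) ` {1..n}"
  have "Min ?M \<in> ?M" using assms(1) by (intro Min_in) auto
  then obtain i where i: "i \<in> {1..n}" and Min_eq: "Min ?M = B ^ n / (1 + \<bar>prod_list (take i ls)\<bar>)"
    by blast
  have "(1 + \<bar>prod_list (take i ls)\<bar>) * real (N_H n H B) \<le> 2 * ((2 * real n + 2) * C) ^ n * B ^ n"
    using i by (intro N_H_mult_eigenvalue_prod_le[OF H ev B assms(2) ls0]) simp
  hence "real (N_H n H B) \<le> 2 * ((2 * real n + 2) * C) ^ n * (B ^ n / (1 + \<bar>prod_list (take i ls)\<bar>))"
    by (simp add: field_simps add_pos_nonneg)
  thus "real (N_H n H B) \<le> 2 * ((2 * real n + 2) * C) ^ n * Min ?M"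
    unfolding Min_eq .
qed

end
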